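(* Let $G=(V,A)$ be a finite directed graph with root $r\in V$ such that every vertex has a directed path to $r$ in $G$. Run the following cluster-popping algorithm. Include each arc of $A$ independently with probability $1/2$, giving a subgraph $(V,S)$. While $(V,S)$ has a cluster, choose (by any rule) a minimal cluster $C$ of $(V,S)$ and re-randomise, independently with probability $1/2$ each, the membership in $S$ of every arc $e\in A$ whose tail lies in $C$. Then the algorithm terminates with probability $1$. On termination, $(V,S)$ is a uniformly random root-connected spanning subgraph of $G$.
   Context: For an arc $e$, $e^-$ denotes its tail and $e^+$ its head. A spanning subgraph $(V,S)$, $S\subseteq A$, is root-connected if every $v\in V$ has a directed path to $r$ in $(V,S)$. A cluster of $(V,S)$ is a nonempty set $C\subseteq V\setminus\{r\}$ such that no arc $e\in S$ has $e^-\in C$ and $e^+\in V\setminus C$. A cluster is minimal if it contains no other cluster as a proper subset. $(V,S)$ is root-connected iff it has no cluster. *)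

theory Defs
  imports "HOL-Probability.Probability_Mass_Function"
begin

text \<open>Directed graph (V, A) with A a set of arcs; an arc e = (u, v) has tail fst e and head snd e.\<close>

definition root_connected :: "'v set \<Rightarrow> 'v \<Rightarrow> ('v \<times> 'v) set \<Rightarrow> bool" where
  "root_connected V r S \<longleftrightarrow> (\<forall>v\<in>V. (v, r) \<in> S\<^sup>*)"

definition is_cluster :: "'v set \<Rightarrow> 'v \<Rightarrow> ('v \<times> 'v) set \<Rightarrow> 'v set \<Rightarrow> bool" where
  "is_cluster V r S C \<longleftrightarrow> C \<noteq> {} \<and> C \<subseteq> V - {r} \<and>
     \<not> (\<exists>e\<in>S. fst e \<in> C \<and> snd e \<in> V - C)"

definition is_minimal_cluster :: "'v set \<Rightarrow> 'v \<Rightarrow> ('v \<times> 'v) set \<Rightarrow> 'v set \<Rightarrow> bool" where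
  "is_minimal_cluster V r S C \<longleftrightarrow> is_cluster V r S C \<and>
     \<not> (\<exists>C'. is_cluster V r S C' \<and> C' \<subset> C)"

definition has_cluster :: "'v set \<Rightarrow> 'v \<Rightarrow> ('v \<times> 'v) set \<Rightarrow> bool" where
  "has_cluster V r S \<longleftrightarrow> (\<exists>C. is_cluster V r S C)"

text \<open>Random subset of a finite set T: each element independently with probability 1/2.\<close>
definition random_subset :: "'a set \<Rightarrow> 'a set pmf" where
  "random_subset T = pmf_of_set (Pow T)"

text \<open>State of the algorithm: the history of subgraphs, most recent first
  (so the choice rule may depend on the whole history).\<close>
definition pop_step ::
  "'v set \<Rightarrow> 'v \<Rightarrow> ('v \<times> 'v) set \<Rightarrow> (('v \<times> 'v) set list \<Rightarrow> 'v set)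
   \<Rightarrow> ('v \<times> 'v) set list \<Rightarrow> ('v \<times> 'v) set list pmf" where
  "pop_step V r A sel h =
     (if has_cluster V r (hd h) then
        (let T = {e \<in> A. fst e \<in> sel h} in
          map_pmf (\<lambda>R. ((hd h - T) \<union> R) # h) (random_subset T))
      else return_pmf h)"

fun pop_run ::
  "'v set \<Rightarrow> 'v \<Rightarrow> ('v \<times> 'v) set \<Rightarrow> (('v \<times> 'v) set list \<Rightarrow> 'v set)
   \<Rightarrow> nat \<Rightarrow> ('v \<times> 'v) set list pmf" where
  "pop_run V r A sel 0 = map_pmf (\<lambda>S. [S]) (random_subset A)"
| "pop_run V r A sel (Suc n) = bind_pmf (pop_run V r A sel n) (pop_step V r A sel)"

end

theory Submission
  imports Defs
begin

text \<open>
  Minimal clusters of a subgraph are pairwise disjoint, and whether C is a minimal cluster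
  depends only on the arcs with tail in C. Hence resampling the arcs of one minimal cluster
  leaves every other minimal cluster in place, and resamplings of disjoint clusters commute.
  By this diamond property the probability of ending in a given root-connected subgraph does
  not depend on the rule choosing the cluster, so it suffices to study one canonical rule.
  For the canonical rule an induction on the number of steps shows that two subgraphs with the
  same minimal clusters, differing only in arcs that no minimal cluster owns, are equally
  likely; all root-connected subgraphs are related in this way. Termination holds because a
  popped cluster owns an arc outside the current subgraph, so with probability at least
  \<open>2^-|A|\<close> each step strictly enlarges the subgraph.
\<close>

lemma prob_bind_pmf:
  "measure_pmf.prob (bind_pmf M K) E = measure_pmf.expectation M (\<lambda>x. measure_pmf.prob (K x) E)"
proof -
  have "measure_pmf.prob (bind_pmf M K) E = pmf (map_pmf (\<lambda>x. x \<in> E) (bind_pmf M K)) True"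
    by (simp add: pmf_map vimage_def)
  also have "\<dots> = pmf (bind_pmf M (\<lambda>x. map_pmf (\<lambda>x. x \<in> E) (K x))) True"
    by (simp add: map_bind_pmf)
  also have "\<dots> = measure_pmf.expectation M (\<lambda>x. measure_pmf.prob (K x) E)"
    by (simp add: pmf_bind pmf_map vimage_def)
  finally show ?thesis .
qed

lemma expectation_le_prob_bind_pmf:
  assumes "\<And>x. x \<in> set_pmf M \<Longrightarrow> 0 \<le> f x \<and> f x \<le> measure_pmf.prob (K x) E"
  shows "measure_pmf.expectation M f \<le> measure_pmf.prob (bind_pmf M K) E"
  unfolding prob_bind_pmf
proof (rule integral_mono_AE)
  have "AE x in measure_pmf M. norm (f x) \<le> 1"
    using assms order_trans[OF _ measure_pmf.prob_le_1] by (intro AE_pmfI) fastforce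
  then show "integrable (measure_pmf M) f"
    by (intro measure_pmf.integrable_const_bound) auto
  show "integrable (measure_pmf M) (\<lambda>x. measure_pmf.prob (K x) E)"
    by (intro measure_pmf.integrable_const_bound[where B = 1]) auto
  show "AE x in measure_pmf M. f x \<le> measure_pmf.prob (K x) E"
    using assms by (intro AE_pmfI) blast
qed

lemma pmf_times_prob_le_prob_bind_pmf:
  "pmf M x * measure_pmf.prob (K x) E \<le> measure_pmf.prob (bind_pmf M K) E"
proof -
  have "measure_pmf.expectation M (\<lambda>y. indicator {x} y * measure_pmf.prob (K x) E)
        \<le> measure_pmf.prob (bind_pmf M K) E"
    by (rule expectation_le_prob_bind_pmf) (simp split: split_indicator)
  then show ?thesis by (simp add: pmf.rep_eq)
qed

lemma pmf_bind_cong_at: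
  "(\<And>x. x \<in> set_pmf M \<Longrightarrow> pmf (f x) y = pmf (g x) y) \<Longrightarrow>
    pmf (bind_pmf M f) y = pmf (bind_pmf M g) y"
  unfolding pmf_bind by (auto intro!: integral_cong_AE AE_pmfI)

lemma incseq_tendsto_one:
  fixes a :: "nat \<Rightarrow> real"
  assumes "incseq a" and "\<And>n. a n \<le> 1" and "0 < c"
    and "\<And>n. a n + c * (1 - a n) \<le> a (n + K)"
  shows "a \<longlonglongrightarrow> 1"
proof -
  obtain L where L: "a \<longlonglongrightarrow> L" using incseq_convergent[OF assms(1)] assms(2) by metis
  have "L \<le> 1" using L assms(2) by (intro LIMSEQ_le_const2) auto
  have "(\<lambda>n. a n + c * (1 - a n)) \<longlonglongrightarrow> L + c * (1 - L)"
    using L by (intro tendsto_intros)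
  moreover have "(\<lambda>n. a (n + K)) \<longlonglongrightarrow> L" using L by (rule LIMSEQ_ignore_initial_segment)
  ultimately have "L + c * (1 - L) \<le> L" using assms(4) by (intro LIMSEQ_le) auto
  then have "L = 1" using \<open>0 < c\<close> \<open>L \<le> 1\<close> by (simp add: mult_le_0_iff)
  then show ?thesis using L by simp
qed

lemma set_pmf_random_subset: "finite T \<Longrightarrow> set_pmf (random_subset T) = Pow T"
  unfolding random_subset_def by (intro set_pmf_of_set) auto


lemma is_cluster_cong_arcs:
  "(\<And>e. fst e \<in> C \<Longrightarrow> e \<in> X \<longleftrightarrow> e \<in> X') \<Longrightarrow> is_cluster V r X C = is_cluster V r X' C"
  unfolding is_cluster_def by blast

lemma is_minimal_cluster_cong_arcs:
  assumes "\<And>e. fst e \<in> C \<Longrightarrow> e \<in> X \<longleftrightarrow> e \<in> X'"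
  shows "is_minimal_cluster V r X C = is_minimal_cluster V r X' C"
proof -
  have "is_cluster V r X C' = is_cluster V r X' C'" if "C' \<subseteq> C" for C'
    using assms that by (intro is_cluster_cong_arcs) blast
  then show ?thesis unfolding is_minimal_cluster_def by (meson order_refl psubset_imp_subset)
qed

lemma minimal_clusters_disjoint:
  assumes "is_minimal_cluster V r X C" "is_minimal_cluster V r X D" "C \<noteq> D"
  shows "C \<inter> D = {}"
proof (rule ccontr)
  assume "C \<inter> D \<noteq> {}"
  with assms have "is_cluster V r X (C \<inter> D)"
    unfolding is_minimal_cluster_def is_cluster_def by auto
  with assms show False unfolding is_minimal_cluster_def by blast
qed

lemma minimal_clusters_eqI:
  assumes "is_minimal_cluster V r X C" "is_minimal_cluster V r X' C"
    and "\<And>D. C \<inter> D = {} \<Longrightarrow> is_minimal_cluster V r X D = is_minimal_cluster V r X' D"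
  shows "is_minimal_cluster V r X = is_minimal_cluster V r X'"
proof
  fix D
  show "is_minimal_cluster V r X D = is_minimal_cluster V r X' D"
  proof (cases "C = D")
    case False
    then have "C \<inter> D = {}" if "is_minimal_cluster V r X D \<or> is_minimal_cluster V r X' D"
      using that False assms(1,2) by (metis minimal_clusters_disjoint)
    then show ?thesis using assms(3) by blast
  qed (use assms(1,2) in blast)
qed

lemma has_minimal_cluster:
  assumes "finite V" and "is_cluster V r X C"
  shows "\<exists>C'. is_minimal_cluster V r X C'"
  using assms(2)
proof (induction "card C" arbitrary: C rule: less_induct)
  case less
  show ?case
  proof (cases "is_minimal_cluster V r X C")
    case False
    then obtain C' where C': "is_cluster V r X C'" "C' \<subset> C"
      using less.prems unfolding is_minimal_cluster_def by blast
    have "finite C" using less.prems assms(1) unfolding is_cluster_def by (meson finite_subset finite_Diff)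
    then show ?thesis using less.hyps C' psubset_card_mono by blast
  qed blast
qed

lemma has_cluster_iff_minimal:
  "finite V \<Longrightarrow> has_cluster V r X \<longleftrightarrow> (\<exists>C. is_minimal_cluster V r X C)"
  unfolding has_cluster_def using has_minimal_cluster is_minimal_cluster_def by metis

lemma is_cluster_rtrancl_closed:
  assumes "is_cluster V r S C" "S \<subseteq> V \<times> V" "(v, w) \<in> S\<^sup>*" "v \<in> C"
  shows "w \<in> C"
  using assms(3,4)
proof (induction rule: rtrancl_induct)
  case (step y z)
  then show ?case using assms(1,2) unfolding is_cluster_def by fastforce
qed

text \<open>The vertices that cannot reach the root form the largest cluster.\<close>

lemma has_cluster_iff_not_root_connected:
  assumes "S \<subseteq> V \<times> V" "r \<in> V"
  shows "has_cluster V r S \<longleftrightarrow> \<not> root_connected V r S"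
proof
  assume "has_cluster V r S"
  then obtain C v where "is_cluster V r S C" "v \<in> C" unfolding has_cluster_def is_cluster_def by blast
  then show "\<not> root_connected V r S"
    using is_cluster_rtrancl_closed[OF _ assms(1)] unfolding root_connected_def is_cluster_def by blast
next
  assume "\<not> root_connected V r S"
  then have "is_cluster V r S {w \<in> V. (w, r) \<notin> S\<^sup>*}"
    unfolding root_connected_def is_cluster_def by (auto intro: converse_rtrancl_into_rtrancl)
  then show "has_cluster V r S" unfolding has_cluster_def by blast
qed


fun iterate_kernel :: "('a \<Rightarrow> 'a pmf) \<Rightarrow> nat \<Rightarrow> 'a \<Rightarrow> 'a pmf" where
  "iterate_kernel K 0 x = return_pmf x"
| "iterate_kernel K (Suc n) x = bind_pmf (iterate_kernel K n x) K"

lemma iterate_kernel_Suc': "iterate_kernel K (Suc n) x = bind_pmf (K x) (iterate_kernel K n)"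
proof (induction n)
  case (Suc n)
  have "iterate_kernel K (Suc (Suc n)) x = bind_pmf (iterate_kernel K (Suc n) x) K"
    by (rule iterate_kernel.simps(2))
  also have "\<dots> = bind_pmf (bind_pmf (K x) (iterate_kernel K n)) K"
    by (simp only: Suc.IH)
  finally show ?case by (simp add: bind_assoc_pmf)
qed (simp add: bind_return_pmf bind_return_pmf')

lemma iterate_kernel_fixpoint: "K x = return_pmf x \<Longrightarrow> iterate_kernel K n x = return_pmf x"
  by (induction n) (simp_all add: bind_return_pmf)

lemma pop_run_add:
  "pop_run V r A sel (m + n) = bind_pmf (pop_run V r A sel m) (iterate_kernel (pop_step V r A sel) n)"
  by (induction n) (simp_all add: bind_return_pmf' bind_assoc_pmf)


locale cluster_popping =
  fixes V :: "'v set" and r :: 'v and A :: "('v \<times> 'v) set"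
  assumes finite_V: "finite V" and arcs_in_V: "A \<subseteq> V \<times> V" and root_in_V: "r \<in> V"
    and root_connected_A: "root_connected V r A"
begin

lemma finite_A: "finite A"
  by (rule finite_subset[OF arcs_in_V]) (simp add: finite_V)

lemma has_cluster_iff_not_root_connected':
  "X \<subseteq> A \<Longrightarrow> has_cluster V r X \<longleftrightarrow> \<not> root_connected V r X"
  using has_cluster_iff_not_root_connected[OF _ root_in_V] arcs_in_V by (metis subset_trans)

definition arcs_from :: "'v set \<Rightarrow> ('v \<times> 'v) set" where
  "arcs_from C = {e \<in> A. fst e \<in> C}"

lemma finite_arcs_from: "finite (arcs_from C)"
  unfolding arcs_from_def using finite_A by simp

lemma arcs_from_cluster_not_subset:
  assumes "is_cluster V r X C"
  shows "\<not> arcs_from C \<subseteq> X"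
proof
  assume "arcs_from C \<subseteq> X"
  with assms have "is_cluster V r A C"
    unfolding is_cluster_def arcs_from_def by blast
  then have "has_cluster V r A" unfolding has_cluster_def by blast
  then show False using has_cluster_iff_not_root_connected' root_connected_A by simp
qed

definition resample :: "'v set \<Rightarrow> ('v \<times> 'v) set \<Rightarrow> ('v \<times> 'v) set pmf" where
  "resample C X = map_pmf (\<lambda>R. X - arcs_from C \<union> R) (random_subset (arcs_from C))"

lemma set_pmf_resample: "set_pmf (resample C X) = (\<lambda>R. X - arcs_from C \<union> R) ` Pow (arcs_from C)"
  unfolding resample_def by (simp add: set_pmf_random_subset finite_arcs_from)

lemma resample_subset: "Y \<in> set_pmf (resample C X) \<Longrightarrow> X \<subseteq> A \<Longrightarrow> Y \<subseteq> A"
  unfolding set_pmf_resample arcs_from_def by blast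

lemma pmf_resample:
  "pmf (resample C X) Y =
     (if X - arcs_from C = Y - arcs_from C then 1 / 2 ^ card (arcs_from C) else 0)"
proof -
  define T where "T = arcs_from C"
  have "Pow T \<inter> (\<lambda>R. X - T \<union> R) -` {Y} = (if X - T = Y - T then {Y \<inter> T} else {})"
    by auto
  moreover have "finite T" unfolding T_def by (rule finite_arcs_from)
  moreover have "pmf (resample C X) Y = card (Pow T \<inter> (\<lambda>R. X - T \<union> R) -` {Y}) / card (Pow T)"
    unfolding resample_def random_subset_def pmf_map T_def[symmetric]
    using \<open>finite T\<close> by (intro measure_pmf_of_set) auto
  ultimately show ?thesis by (simp add: card_Pow T_def)
qed

lemma resample_commute:
  assumes "C \<inter> D = {}"
  shows "bind_pmf (resample C X) (resample D) = bind_pmf (resample D X) (resample C)"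
proof -
  have swap: "X - arcs_from C \<union> R - arcs_from D \<union> R' = X - arcs_from D \<union> R' - arcs_from C \<union> R"
    if "R \<subseteq> arcs_from C" "R' \<subseteq> arcs_from D" for R R'
    using assms that unfolding arcs_from_def by blast
  have unfold: "bind_pmf (resample C X) (resample D) =
      bind_pmf (random_subset (arcs_from C)) (\<lambda>R. bind_pmf (random_subset (arcs_from D))
        (\<lambda>R'. return_pmf (X - arcs_from C \<union> R - arcs_from D \<union> R')))" for C D
    unfolding resample_def map_pmf_def by (simp add: bind_assoc_pmf bind_return_pmf)
  show ?thesis
    unfolding unfold
    by (subst bind_commute_pmf, intro bind_pmf_cong refl)
       (simp add: set_pmf_random_subset finite_arcs_from swap)
qed

lemma is_minimal_cluster_resample:
  assumes "is_minimal_cluster V r X C" "C \<inter> D = {}" "Y \<in> set_pmf (resample D X)"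
  shows "is_minimal_cluster V r Y C"
proof -
  obtain R where R: "R \<subseteq> arcs_from D" "Y = X - arcs_from D \<union> R"
    using assms(3) unfolding set_pmf_resample by blast
  have "e \<in> Y \<longleftrightarrow> e \<in> X" if "fst e \<in> C" for e
    using assms(2) R that unfolding arcs_from_def by auto
  then show ?thesis using assms(1) by (subst is_minimal_cluster_cong_arcs) auto
qed

lemma pop_step_has_cluster:
  "has_cluster V r (hd h) \<Longrightarrow>
    pop_step V r A sel h = map_pmf (\<lambda>Y. Y # h) (resample (sel h) (hd h))"
  unfolding pop_step_def resample_def arcs_from_def by (simp add: map_pmf_comp Let_def)

lemma pop_step_no_cluster: "\<not> has_cluster V r (hd h) \<Longrightarrow> pop_step V r A sel h = return_pmf h"
  unfolding pop_step_def by simp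

lemma set_pmf_pop_run: "h \<in> set_pmf (pop_run V r A sel n) \<Longrightarrow> hd h \<subseteq> A"
proof (induction n arbitrary: h)
  case 0
  then show ?case by (auto simp: set_pmf_random_subset finite_A)
next
  case (Suc n)
  then obtain h' where "h' \<in> set_pmf (pop_run V r A sel n)" "h \<in> set_pmf (pop_step V r A sel h')"
    by auto
  with Suc.IH show ?case
    by (cases "has_cluster V r (hd h')")
       (auto simp: pop_step_has_cluster pop_step_no_cluster dest!: resample_subset)
qed


subsection \<open>Independence of the choice rule\<close>

definition some_minimal_cluster :: "('v \<times> 'v) set \<Rightarrow> 'v set" where
  "some_minimal_cluster X = (SOME C. is_minimal_cluster V r X C)"

lemma is_minimal_some_minimal_cluster:
  "has_cluster V r X \<Longrightarrow> is_minimal_cluster V r X (some_minimal_cluster X)"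
  unfolding some_minimal_cluster_def using has_cluster_iff_minimal[OF finite_V] by (metis someI_ex)

definition canonical_step :: "('v \<times> 'v) set \<Rightarrow> ('v \<times> 'v) set pmf" where
  "canonical_step X =
     (if has_cluster V r X then resample (some_minimal_cluster X) X else return_pmf X)"

abbreviation canonical_iterate :: "nat \<Rightarrow> ('v \<times> 'v) set \<Rightarrow> ('v \<times> 'v) set pmf" where
  "canonical_iterate \<equiv> iterate_kernel canonical_step"

lemma canonical_iterate_Suc_cluster:
  "has_cluster V r X \<Longrightarrow>
    canonical_iterate (Suc k) X = bind_pmf (resample (some_minimal_cluster X) X) (canonical_iterate k)"
  unfolding iterate_kernel_Suc' canonical_step_def by simp

text \<open>Diamond lemma. It holds only at a root-connected S: the laws of the intermediate
  subgraphs do depend on which cluster is popped.\<close>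

lemma pmf_canonical_iterate_pop_any:
  assumes "\<not> has_cluster V r S"
    and "is_minimal_cluster V r X C" "is_minimal_cluster V r X C'"
  shows "pmf (bind_pmf (resample C X) (canonical_iterate k)) S =
         pmf (bind_pmf (resample C' X) (canonical_iterate k)) S"
  using assms(2,3)
proof (induction k arbitrary: X C C')
  case 0
  have no_mass: "pmf (resample D X) S = 0"
    if "is_minimal_cluster V r X D" "is_minimal_cluster V r X D'" "D \<noteq> D'" for D D'
  proof (rule ccontr)
    assume "pmf (resample D X) S \<noteq> 0"
    then have "S \<in> set_pmf (resample D X)" by (simp add: pmf_eq_0_set_pmf)
    moreover have "D' \<inter> D = {}" using minimal_clusters_disjoint[OF that] by blast
    ultimately have "is_minimal_cluster V r S D'" using is_minimal_cluster_resample[OF that(2)] by blast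
    then show False using assms(1) unfolding has_cluster_def is_minimal_cluster_def by blast
  qed
  show ?case
  proof (cases "C = C'")
    case False
    then show ?thesis
      using no_mass[OF "0.prems"] no_mass[OF "0.prems"(2,1)] by (simp add: bind_return_pmf')
  qed simp
next
  case (Suc k)
  have pop_C_first: "pmf (bind_pmf (resample C X) (canonical_iterate (Suc k))) S =
      pmf (bind_pmf (bind_pmf (resample C X) (resample C')) (canonical_iterate k)) S"
    if "is_minimal_cluster V r X C'" "C \<inter> C' = {}" for C C'
  proof -
    have "pmf (canonical_iterate (Suc k) Y) S = pmf (bind_pmf (resample C' Y) (canonical_iterate k)) S"
      if "Y \<in> set_pmf (resample C X)" for Y
    proof -
      have Y: "is_minimal_cluster V r Y C'"
        using is_minimal_cluster_resample[OF \<open>is_minimal_cluster V r X C'\<close> _ that]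
          \<open>C \<inter> C' = {}\<close> by blast
      then have cluster: "has_cluster V r Y" unfolding has_cluster_def is_minimal_cluster_def by blast
      show ?thesis
        unfolding canonical_iterate_Suc_cluster[OF cluster]
        by (rule Suc.IH[OF is_minimal_some_minimal_cluster[OF cluster] Y])
    qed
    then show ?thesis unfolding bind_assoc_pmf by (rule pmf_bind_cong_at)
  qed
  show ?case
  proof (cases "C = C'")
    case False
    then have disjoint: "C \<inter> C' = {}" "C' \<inter> C = {}"
      using minimal_clusters_disjoint[OF Suc.prems False] by auto
    have "pmf (bind_pmf (resample C X) (canonical_iterate (Suc k))) S =
        pmf (bind_pmf (bind_pmf (resample C X) (resample C')) (canonical_iterate k)) S"
      using pop_C_first[OF Suc.prems(2) disjoint(1)] .
    also have "\<dots> = pmf (bind_pmf (bind_pmf (resample C' X) (resample C)) (canonical_iterate k)) S"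
      by (simp only: resample_commute[OF disjoint(1)])
    also have "\<dots> = pmf (bind_pmf (resample C' X) (canonical_iterate (Suc k))) S"
      using pop_C_first[OF Suc.prems(1) disjoint(2)] ..
    finally show ?thesis .
  qed simp
qed

lemma pmf_pop_iterate_eq_canonical:
  assumes sel: "\<And>h. has_cluster V r (hd h) \<Longrightarrow> is_minimal_cluster V r (hd h) (sel h)"
    and "\<not> has_cluster V r S"
  shows "pmf (map_pmf hd (iterate_kernel (pop_step V r A sel) k h)) S =
         pmf (canonical_iterate k (hd h)) S"
proof (induction k arbitrary: h)
  case 0
  then show ?case by simp
next
  case (Suc k)
  show ?case
  proof (cases "has_cluster V r (hd h)")
    case True
    have "pmf (map_pmf hd (iterate_kernel (pop_step V r A sel) (Suc k) h)) S =
        pmf (bind_pmf (resample (sel h) (hd h))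
          (\<lambda>Y. map_pmf hd (iterate_kernel (pop_step V r A sel) k (Y # h)))) S"
      unfolding iterate_kernel_Suc' pop_step_has_cluster[OF True] map_bind_pmf bind_map_pmf ..
    also have "\<dots> = pmf (bind_pmf (resample (sel h) (hd h)) (canonical_iterate k)) S"
      by (rule pmf_bind_cong_at) (simp add: Suc.IH)
    also have "\<dots> = pmf (bind_pmf (resample (some_minimal_cluster (hd h)) (hd h)) (canonical_iterate k)) S"
      by (rule pmf_canonical_iterate_pop_any[OF assms(2) sel[OF True]
          is_minimal_some_minimal_cluster[OF True]])
    also have "\<dots> = pmf (canonical_iterate (Suc k) (hd h)) S"
      unfolding canonical_iterate_Suc_cluster[OF True] ..
    finally show ?thesis .
  next
    case False
    have "iterate_kernel (pop_step V r A sel) (Suc k) h = return_pmf h"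
      by (rule iterate_kernel_fixpoint) (simp add: pop_step_no_cluster False)
    moreover have "canonical_iterate (Suc k) (hd h) = return_pmf (hd h)"
      by (rule iterate_kernel_fixpoint) (simp add: canonical_step_def False)
    ultimately show ?thesis by simp
  qed
qed

definition canonical_law :: "nat \<Rightarrow> ('v \<times> 'v) set pmf" where
  "canonical_law n = bind_pmf (random_subset A) (canonical_iterate n)"

lemma prob_pop_run_eq_canonical_law:
  assumes "\<And>h. has_cluster V r (hd h) \<Longrightarrow> is_minimal_cluster V r (hd h) (sel h)"
    and "\<not> has_cluster V r S"
  shows "measure_pmf.prob (pop_run V r A sel n) {h. hd h = S} = pmf (canonical_law n) S"
proof -
  have "measure_pmf.prob (pop_run V r A sel n) {h. hd h = S} =
      pmf (map_pmf hd (pop_run V r A sel n)) S"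
    by (simp add: pmf_map vimage_def)
  also have "\<dots> = pmf (bind_pmf (random_subset A)
      (\<lambda>X. map_pmf hd (iterate_kernel (pop_step V r A sel) n [X]))) S"
    using pop_run_add[of V r A sel 0 n] by (simp add: map_bind_pmf bind_map_pmf)
  also have "\<dots> = pmf (canonical_law n) S"
    unfolding canonical_law_def
    by (rule pmf_bind_cong_at) (simp add: pmf_pop_iterate_eq_canonical[OF assms])
  finally show ?thesis .
qed


subsection \<open>Uniformity for the canonical rule\<close>

lemma canonical_law_0: "canonical_law 0 = random_subset A"
proof -
  have "canonical_law 0 = bind_pmf (random_subset A) return_pmf"
    unfolding canonical_law_def by (intro bind_pmf_cong) simp_all
  then show ?thesis by (simp add: bind_return_pmf')
qed

lemma canonical_law_Suc: "canonical_law (Suc n) = bind_pmf (canonical_law n) canonical_step"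
  unfolding canonical_law_def bind_assoc_pmf by (intro bind_pmf_cong) simp_all

lemma set_pmf_canonical_law: "X \<in> set_pmf (canonical_law n) \<Longrightarrow> X \<subseteq> A"
proof (induction n arbitrary: X)
  case 0
  then show ?case by (simp add: canonical_law_0 set_pmf_random_subset finite_A)
next
  case (Suc n)
  then show ?case
    by (auto simp: canonical_law_Suc canonical_step_def split: if_splits dest: resample_subset)
qed

definition predecessors :: "('v \<times> 'v) set \<Rightarrow> ('v \<times> 'v) set set" where
  "predecessors Z = {X \<in> Pow A. has_cluster V r X \<and>
     X - arcs_from (some_minimal_cluster X) = Z - arcs_from (some_minimal_cluster X)}"

lemma pmf_canonical_law_Suc:
  assumes "Z \<subseteq> A"
  shows "pmf (canonical_law (Suc n)) Z =
    (\<Sum>X\<in>predecessors Z. pmf (canonical_law n) X / 2 ^ card (arcs_from (some_minimal_cluster X)))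
    + (if has_cluster V r Z then 0 else pmf (canonical_law n) Z)"
proof -
  let ?T = "\<lambda>X. arcs_from (some_minimal_cluster X)"
  let ?w = "\<lambda>X. pmf (canonical_law n) X / 2 ^ card (?T X)"
  let ?stay = "if has_cluster V r Z then 0 else pmf (canonical_law n) Z"
  have "pmf (canonical_law (Suc n)) Z =
      (\<Sum>X\<in>Pow A. pmf (canonical_step X) Z * pmf (canonical_law n) X)"
    unfolding canonical_law_Suc pmf_bind
    by (rule integral_measure_pmf_real) (auto simp: finite_A dest: set_pmf_canonical_law)
  also have "\<dots> = (\<Sum>X\<in>Pow A. (if has_cluster V r X \<and> X - ?T X = Z - ?T X then ?w X else 0)
      + (if X = Z then ?stay else 0))"
    by (intro sum.cong refl)
       (auto simp: canonical_step_def pmf_resample split: split_indicator)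
  also have "\<dots> = (\<Sum>X\<in>predecessors Z. ?w X) + ?stay"
  proof -
    have "(\<Sum>X\<in>Pow A. if has_cluster V r X \<and> X - ?T X = Z - ?T X then ?w X else 0) =
        (\<Sum>X\<in>predecessors Z. ?w X)"
      unfolding predecessors_def using finite_A by (intro sum.inter_filter[symmetric]) simp
    then show ?thesis unfolding sum.distrib using assms finite_A by simp
  qed
  finally show ?thesis .
qed

definition exchangeable :: "('v \<times> 'v) set \<Rightarrow> ('v \<times> 'v) set \<Rightarrow> ('v \<times> 'v) set \<Rightarrow> bool" where
  "exchangeable B Y Y' \<longleftrightarrow> Y \<subseteq> A \<and> Y' \<subseteq> A \<and> Y - B = Y' - B \<and>
     is_minimal_cluster V r Y = is_minimal_cluster V r Y' \<and>
     (\<forall>C. is_minimal_cluster V r Y C \<longrightarrow> arcs_from C \<inter> B = {})"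

lemma exchangeable_sym: "exchangeable B Y Y' \<Longrightarrow> exchangeable B Y' Y"
  unfolding exchangeable_def by auto

definition transplant :: "('v \<times> 'v) set \<Rightarrow> ('v \<times> 'v) set \<Rightarrow> ('v \<times> 'v) set" where
  "transplant Y X = Y - arcs_from (some_minimal_cluster X) \<union> X \<inter> arcs_from (some_minimal_cluster X)"

lemma exchangeable_transplant:
  assumes "exchangeable B Y Y'" "X \<in> predecessors Y"
  shows "exchangeable (B - arcs_from (some_minimal_cluster X)) X (transplant Y' X)"
proof -
  define C where "C = some_minimal_cluster X"
  define T where "T = arcs_from C"
  define X' where "X' = transplant Y' X"
  have X: "X \<subseteq> A" "has_cluster V r X" "X - T = Y - T"
    using assms(2) unfolding predecessors_def C_def T_def by auto
  have Y: "Y \<subseteq> A" "Y' \<subseteq> A" "Y - B = Y' - B"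
    and same: "is_minimal_cluster V r Y = is_minimal_cluster V r Y'"
    and owns: "\<And>D. is_minimal_cluster V r Y D \<Longrightarrow> arcs_from D \<inter> B = {}"
    using assms(1) unfolding exchangeable_def by auto
  have X': "X' = Y' - T \<union> X \<inter> T" unfolding X'_def transplant_def C_def T_def ..
  have CX: "is_minimal_cluster V r X C"
    unfolding C_def by (rule is_minimal_some_minimal_cluster[OF X(2)])
  have near: "e \<in> X' \<longleftrightarrow> e \<in> X" if "fst e \<in> C" for e
    using that X(1) Y(2) unfolding X' T_def arcs_from_def by blast
  have CX': "is_minimal_cluster V r X' C"
    using CX is_minimal_cluster_cong_arcs[of C X' X, OF near] by simp
  have away: "e \<in> X \<longleftrightarrow> e \<in> Y" "e \<in> X' \<longleftrightarrow> e \<in> Y'" if "C \<inter> D = {}" "fst e \<in> D" for e D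
  proof -
    have "e \<notin> T" using that unfolding T_def arcs_from_def by blast
    then show "e \<in> X \<longleftrightarrow> e \<in> Y" "e \<in> X' \<longleftrightarrow> e \<in> Y'" using X(3) unfolding X' by blast+
  qed
  have away_min: "is_minimal_cluster V r X D = is_minimal_cluster V r Y D"
    "is_minimal_cluster V r X' D = is_minimal_cluster V r Y' D" if "C \<inter> D = {}" for D
    using is_minimal_cluster_cong_arcs[of D X Y, OF away(1)[OF that]]
      is_minimal_cluster_cong_arcs[of D X' Y', OF away(2)[OF that]] by auto
  have same': "is_minimal_cluster V r X = is_minimal_cluster V r X'"
    by (rule minimal_clusters_eqI[OF CX CX']) (simp add: away_min same)
  have "arcs_from D \<inter> (B - T) = {}" if "is_minimal_cluster V r X D" for D
  proof (cases "D = C")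
    case False
    then have "C \<inter> D = {}" using minimal_clusters_disjoint[OF CX that] by blast
    then have "is_minimal_cluster V r Y D" using that away_min by simp
    then show ?thesis using owns by blast
  qed (simp add: T_def)
  moreover have "X - (B - T) = X' - (B - T)" using X(1,3) Y(3) unfolding X' by blast
  moreover have "X' \<subseteq> A" using X(1) Y(2) unfolding X' by blast
  ultimately show ?thesis
    using X(1) same' unfolding exchangeable_def C_def[symmetric] T_def[symmetric] X'_def[symmetric]
    by blast
qed

lemma some_minimal_cluster_cong:
  "is_minimal_cluster V r X = is_minimal_cluster V r X' \<Longrightarrow>
    some_minimal_cluster X = some_minimal_cluster X'"
  unfolding some_minimal_cluster_def by simp

lemma transplant_predecessors:
  assumes "exchangeable B Y Y'" "X \<in> predecessors Y"
  shows "transplant Y' X \<in> predecessors Y'" and "transplant Y (transplant Y' X) = X"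
    and "some_minimal_cluster (transplant Y' X) = some_minimal_cluster X"
proof -
  have same: "is_minimal_cluster V r X = is_minimal_cluster V r (transplant Y' X)"
    and "transplant Y' X \<subseteq> A"
    using exchangeable_transplant[OF assms] unfolding exchangeable_def by auto
  then show smc: "some_minimal_cluster (transplant Y' X) = some_minimal_cluster X"
    using some_minimal_cluster_cong by metis
  have "has_cluster V r (transplant Y' X)"
    using assms(2) same has_cluster_iff_minimal[OF finite_V] unfolding predecessors_def by auto
  moreover have "transplant Y' X - arcs_from (some_minimal_cluster X) =
      Y' - arcs_from (some_minimal_cluster X)"
    unfolding transplant_def by blast
  ultimately show "transplant Y' X \<in> predecessors Y'"
    using \<open>transplant Y' X \<subseteq> A\<close> smc by (simp add: predecessors_def)
  have "transplant Y (transplant Y' X) =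
      Y - arcs_from (some_minimal_cluster X) \<union> transplant Y' X \<inter> arcs_from (some_minimal_cluster X)"
    unfolding transplant_def[of Y "transplant Y' X"] smc ..
  also have "\<dots> = X" using assms(2) unfolding transplant_def predecessors_def by auto
  finally show "transplant Y (transplant Y' X) = X" .
qed

lemma pmf_canonical_law_exchangeable:
  "exchangeable B Y Y' \<Longrightarrow> pmf (canonical_law n) Y = pmf (canonical_law n) Y'"
proof (induction n arbitrary: B Y Y')
  case 0
  have "Pow A \<noteq> {}" by blast
  with 0 show ?case
    using finite_A by (simp add: canonical_law_0 random_subset_def exchangeable_def)
next
  case (Suc n)
  let ?w = "\<lambda>X. pmf (canonical_law n) X / 2 ^ card (arcs_from (some_minimal_cluster X))"
  have transplant_pmf: "pmf (canonical_law n) (transplant Y' X) = pmf (canonical_law n) X"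
    if "exchangeable B Y Y'" "X \<in> predecessors Y" for B Y Y' X
    using Suc.IH[OF exchangeable_transplant[OF that]] by simp
  have "sum ?w (predecessors Y) = sum ?w (predecessors Y')"
    using Suc.prems exchangeable_sym[OF Suc.prems]
    by (intro sum.reindex_bij_witness[where i = "transplant Y" and j = "transplant Y'"])
       (auto simp: transplant_predecessors transplant_pmf)
  moreover have "has_cluster V r Y = has_cluster V r Y'"
    using Suc.prems has_cluster_iff_minimal[OF finite_V] unfolding exchangeable_def by metis
  moreover have "Y \<subseteq> A" "Y' \<subseteq> A" using Suc.prems unfolding exchangeable_def by auto
  ultimately show ?case using pmf_canonical_law_Suc Suc.IH[OF Suc.prems] by simp
qed

lemma pmf_canonical_law_root_connected:
  assumes "S \<subseteq> A" "root_connected V r S" "S' \<subseteq> A" "root_connected V r S'"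
  shows "pmf (canonical_law n) S = pmf (canonical_law n) S'"
proof (rule pmf_canonical_law_exchangeable)
  have "\<not> is_minimal_cluster V r X C" if "X \<subseteq> A" "root_connected V r X" for X C
    using that has_cluster_iff_not_root_connected' unfolding has_cluster_def is_minimal_cluster_def
    by blast
  with assms show "exchangeable A S S'" unfolding exchangeable_def by auto
qed


subsection \<open>Termination\<close>

abbreviation terminated :: "('v \<times> 'v) set list set" where
  "terminated \<equiv> {h. \<not> has_cluster V r (hd h)}"

lemma prob_terminated_iterate:
  assumes sel: "\<And>h. has_cluster V r (hd h) \<Longrightarrow> is_minimal_cluster V r (hd h) (sel h)"
  shows "hd h \<subseteq> A \<Longrightarrow> card (A - hd h) \<le> m \<Longrightarrow>
    (1 / 2 ^ card A) ^ m \<le> measure_pmf.prob (iterate_kernel (pop_step V r A sel) m h) terminated"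
proof (induction m arbitrary: h)
  case 0
  then have "hd h = A" using finite_A by auto
  then show ?case
    using has_cluster_iff_not_root_connected' root_connected_A by simp
next
  case (Suc m)
  show ?case
  proof (cases "has_cluster V r (hd h)")
    case True
    define T where "T = arcs_from (sel h)"
    define h' where "h' = (hd h \<union> T) # h"
    have "\<not> T \<subseteq> hd h"
      using arcs_from_cluster_not_subset sel[OF True] unfolding T_def is_minimal_cluster_def by blast
    moreover have "T \<subseteq> A" unfolding T_def arcs_from_def by blast
    ultimately have "card (A - (hd h \<union> T)) < card (A - hd h)"
      using finite_A by (intro psubset_card_mono) auto
    then have IH: "(1 / 2 ^ card A) ^ m \<le>
        measure_pmf.prob (iterate_kernel (pop_step V r A sel) m h') terminated"
      using Suc.prems \<open>T \<subseteq> A\<close> by (intro Suc.IH) (auto simp: h'_def)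
    have "pmf (pop_step V r A sel h) h' = 1 / 2 ^ card T"
      unfolding pop_step_has_cluster[OF True] h'_def
      by (subst pmf_map_inj') (auto simp: inj_on_def pmf_resample T_def)
    moreover have "card T \<le> card A" using \<open>T \<subseteq> A\<close> finite_A by (rule card_mono[rotated])
    ultimately have "1 / 2 ^ card A \<le> pmf (pop_step V r A sel h) h'"
      using power_increasing[of "card T" "card A" "2::real"] by (simp add: frac_le)
    with IH have "(1 / 2 ^ card A) ^ Suc m \<le>
        pmf (pop_step V r A sel h) h' *
        measure_pmf.prob (iterate_kernel (pop_step V r A sel) m h') terminated"
      unfolding power_Suc by (intro mult_mono) auto
    also have "\<dots> \<le> measure_pmf.prob (iterate_kernel (pop_step V r A sel) (Suc m) h) terminated"
      unfolding iterate_kernel_Suc' by (rule pmf_times_prob_le_prob_bind_pmf)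
    finally show ?thesis .
  next
    case False
    have "iterate_kernel (pop_step V r A sel) (Suc m) h = return_pmf h"
      by (rule iterate_kernel_fixpoint) (simp add: pop_step_no_cluster False)
    moreover have "(1 / 2 ^ card A) ^ Suc m \<le> (1::real)" by (rule power_le_one) auto
    ultimately show ?thesis using False by simp
  qed
qed

lemma pop_run_terminates:
  assumes sel: "\<And>h. has_cluster V r (hd h) \<Longrightarrow> is_minimal_cluster V r (hd h) (sel h)"
  shows "(\<lambda>n. measure_pmf.prob (pop_run V r A sel n) terminated) \<longlonglongrightarrow> 1"
proof -
  define a where "a n = measure_pmf.prob (pop_run V r A sel n) terminated" for n
  have progress: "a n + c * (1 - a n) \<le> a (n + k)"
    if "0 \<le> c" "c \<le> 1"
      and "\<And>h. h \<in> set_pmf (pop_run V r A sel n) \<Longrightarrow> has_cluster V r (hd h) \<Longrightarrow>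
        c \<le> measure_pmf.prob (iterate_kernel (pop_step V r A sel) k h) terminated"
    for n k c
  proof -
    have "measure_pmf.expectation (pop_run V r A sel n) (\<lambda>h. c + (1 - c) * indicator terminated h)
        = c + (1 - c) * a n"
      unfolding a_def
      by (subst Bochner_Integration.integral_add)
         (auto intro!: measure_pmf.integrable_const_bound[where B = "\<bar>c\<bar> + \<bar>1 - c\<bar>"]
           split: split_indicator)
    then have "a n + c * (1 - a n) =
        measure_pmf.expectation (pop_run V r A sel n) (\<lambda>h. c + (1 - c) * indicator terminated h)"
      by (simp add: algebra_simps)
    also have "\<dots> \<le> a (n + k)"
      unfolding a_def pop_run_add
      using that by (intro expectation_le_prob_bind_pmf)
        (auto split: split_indicator simp: iterate_kernel_fixpoint pop_step_no_cluster)
    finally show ?thesis .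
  qed
  have "incseq a"
    using progress[of 0 _ 1] by (intro incseq_SucI) simp
  moreover have "a n + (1 / 2 ^ card A) ^ card A * (1 - a n) \<le> a (n + card A)" for n
    using finite_A
    by (intro progress prob_terminated_iterate[OF sel])
       (auto simp: power_le_one set_pmf_pop_run card_mono)
  ultimately have "a \<longlonglongrightarrow> 1" by (intro incseq_tendsto_one) (auto simp: a_def)
  then show ?thesis unfolding a_def .
qed

lemma prob_pop_run_root_connected:
  assumes sel: "\<And>h. has_cluster V r (hd h) \<Longrightarrow> is_minimal_cluster V r (hd h) (sel h)"
    and S: "S \<subseteq> A" "root_connected V r S"
  defines "good \<equiv> {S'. S' \<subseteq> A \<and> root_connected V r S'}"
  shows "measure_pmf.prob (pop_run V r A sel n) {h. hd h = S} =
    measure_pmf.prob (pop_run V r A sel n) terminated / card good"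
proof -
  let ?M = "map_pmf hd (pop_run V r A sel n)"
  have good_iff: "S' \<in> good \<longleftrightarrow> S' \<subseteq> A \<and> \<not> has_cluster V r S'" for S'
    using has_cluster_iff_not_root_connected' unfolding good_def by blast
  have "finite good" unfolding good_def using finite_A by (simp add: finite_subset[of _ "Pow A"])
  have "S \<in> good" using S unfolding good_def by blast
  have pmf_M: "pmf ?M S' = pmf (canonical_law n) S" if "S' \<in> good" for S'
  proof -
    have "pmf ?M S' = pmf (canonical_law n) S'"
      using prob_pop_run_eq_canonical_law[OF sel] that good_iff by (simp add: pmf_map vimage_def)
    also have "\<dots> = pmf (canonical_law n) S"
      using pmf_canonical_law_root_connected S that unfolding good_def by blast
    finally show ?thesis .
  qed
  have "set_pmf ?M \<subseteq> Pow A" using set_pmf_pop_run by auto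
  then have "{X. \<not> has_cluster V r X} \<inter> set_pmf ?M = good \<inter> set_pmf ?M"
    using good_iff by blast
  then have "measure_pmf.prob ?M {X. \<not> has_cluster V r X} = measure_pmf.prob ?M good"
    by (metis measure_Int_set_pmf)
  then have "measure_pmf.prob (pop_run V r A sel n) terminated = measure_pmf.prob ?M good"
    by (simp add: vimage_def)
  also have "\<dots> = (\<Sum>S'\<in>good. pmf ?M S')"
    using \<open>finite good\<close> by (rule measure_measure_pmf_finite)
  also have "\<dots> = card good * measure_pmf.prob (pop_run V r A sel n) {h. hd h = S}"
    using pmf_M pmf_M[OF \<open>S \<in> good\<close>] by (simp add: pmf_map vimage_def)
  finally show ?thesis
    using \<open>finite good\<close> \<open>S \<in> good\<close> by (auto simp: card_gt_0_iff)
qed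

end


theorem mainTheorem12:
  fixes V :: "'v set" and A :: "('v \<times> 'v) set" and r :: 'v
    and sel :: "('v \<times> 'v) set list \<Rightarrow> 'v set"
  assumes "finite V" and "A \<subseteq> V \<times> V" and "r \<in> V"
    and "root_connected V r A"
    and "\<And>h. has_cluster V r (hd h) \<Longrightarrow> is_minimal_cluster V r (hd h) (sel h)"
  shows "((\<lambda>n. measure_pmf.prob (pop_run V r A sel n) {h. \<not> has_cluster V r (hd h)})
           \<longlonglongrightarrow> 1) \<and>
         (\<forall>S. S \<subseteq> A \<and> root_connected V r S \<longrightarrow>
          (\<lambda>n. measure_pmf.prob (pop_run V r A sel n) {h. hd h = S})
           \<longlonglongrightarrow> 1 / real (card {S'. S' \<subseteq> A \<and> root_connected V r S'}))"
proof -
  interpret cluster_popping V r A using assms(1-4) by unfold_locales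
  have terminates: "(\<lambda>n. measure_pmf.prob (pop_run V r A sel n) terminated) \<longlonglongrightarrow> 1"
    using pop_run_terminates assms(5) .
  moreover have "(\<lambda>n. measure_pmf.prob (pop_run V r A sel n) {h. hd h = S})
      \<longlonglongrightarrow> 1 / real (card {S'. S' \<subseteq> A \<and> root_connected V r S'})"
    if "S \<subseteq> A" "root_connected V r S" for S
    using prob_pop_run_root_connected[OF assms(5) that]
      tendsto_mult_right[OF terminates, of "1 / card {S'. S' \<subseteq> A \<and> root_connected V r S'}"]
    by simp
  ultimately show ?thesis by blast
qed

end
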